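(* If $G$ is a nontrivial graph of order $n$ having a vertex of degree $k$, then $\beta_p(G)\le n-\min\{k,n-1-k\}$.
   Context: All graphs are finite, simple, undirected and connected. For a partition $\Pi=\{S_1,\dots,S_m\}$ of $V(G)$, $r(u|\Pi)=(d(u,S_1),\dots,d(u,S_m))$ with $d(u,S)=\min_{w\in S}d(u,w)$; $\Pi$ is locating if $r(u|\Pi)\ne r(v|\Pi)$ for all distinct $u,v$; $\beta_p(G)$ is the minimum size of a locating partition. *)

theory Defs
  imports Main
begin

definition simple_graph :: "'a set \<Rightarrow> ('a \<Rightarrow> 'a \<Rightarrow> bool) \<Rightarrow> bool" where
  "simple_graph V E \<longleftrightarrow> finite V \<and> (\<forall>u v. E u v \<longrightarrow> u \<in> V \<and> v \<in> V)
     \<and> (\<forall>u v. E u v \<longrightarrow> E v u) \<and> (\<forall>u. \<not> E u u)"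

definition walk :: "'a set \<Rightarrow> ('a \<Rightarrow> 'a \<Rightarrow> bool) \<Rightarrow> 'a list \<Rightarrow> bool" where
  "walk V E p \<longleftrightarrow> p \<noteq> [] \<and> set p \<subseteq> V \<and> (\<forall>i. Suc i < length p \<longrightarrow> E (p ! i) (p ! Suc i))"

definition connected_graph :: "'a set \<Rightarrow> ('a \<Rightarrow> 'a \<Rightarrow> bool) \<Rightarrow> bool" where
  "connected_graph V E \<longleftrightarrow> V \<noteq> {} \<and>
     (\<forall>u\<in>V. \<forall>v\<in>V. \<exists>p. walk V E p \<and> hd p = u \<and> last p = v)"

definition gdist :: "'a set \<Rightarrow> ('a \<Rightarrow> 'a \<Rightarrow> bool) \<Rightarrow> 'a \<Rightarrow> 'a \<Rightarrow> nat" where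
  "gdist V E u v = (LEAST n. \<exists>p. walk V E p \<and> hd p = u \<and> last p = v \<and> length p = Suc n)"

definition set_dist :: "'a set \<Rightarrow> ('a \<Rightarrow> 'a \<Rightarrow> bool) \<Rightarrow> 'a \<Rightarrow> 'a set \<Rightarrow> nat" where
  "set_dist V E u S = (LEAST d. \<exists>w\<in>S. d = gdist V E u w)"

definition degree :: "'a set \<Rightarrow> ('a \<Rightarrow> 'a \<Rightarrow> bool) \<Rightarrow> 'a \<Rightarrow> nat" where
  "degree V E v = card {w \<in> V. E v w}"

definition is_partition :: "'a set \<Rightarrow> 'a set set \<Rightarrow> bool" where
  "is_partition V P \<longleftrightarrow> (\<forall>S\<in>P. S \<noteq> {}) \<and> \<Union>P = V \<and>
     (\<forall>S\<in>P. \<forall>T\<in>P. S \<noteq> T \<longrightarrow> S \<inter> T = {})"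

text \<open>Locating: distinct vertices differ in their distance to some block
  (equivalently, the representation vectors r(u|P) w.r.t. any ordering of P differ).\<close>
definition locating_partition :: "'a set \<Rightarrow> ('a \<Rightarrow> 'a \<Rightarrow> bool) \<Rightarrow> 'a set set \<Rightarrow> bool" where
  "locating_partition V E P \<longleftrightarrow> is_partition V P \<and>
     (\<forall>u\<in>V. \<forall>v\<in>V. u \<noteq> v \<longrightarrow> (\<exists>S\<in>P. set_dist V E u S \<noteq> set_dist V E v S))"

definition partition_dimension :: "'a set \<Rightarrow> ('a \<Rightarrow> 'a \<Rightarrow> bool) \<Rightarrow> nat" where
  "partition_dimension V E = (LEAST m. \<exists>P. locating_partition V E P \<and> card P = m)"

end

theory Submission
  imports Defs
begin

text \<open>Pair up \<open>m = min k (n - 1 - k)\<close> neighbours \<open>u\<close> of \<open>v\<close> with as many non-neighbours \<open>f u\<close>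
  of \<open>v\<close> and put every other vertex into a singleton. The partition has \<open>n - m\<close> blocks.
  Vertices in different blocks are separated by the block of either of them (distance 0 versus
  positive), and the two vertices of a pair are separated by the singleton \<open>{v}\<close>, at distance
  1 and at least 2 respectively.\<close>

lemma gdist_walk:
  assumes "connected_graph V E" "x \<in> V" "y \<in> V"
  shows "\<exists>p. walk V E p \<and> hd p = x \<and> last p = y \<and> length p = Suc (gdist V E x y)"
proof -
  obtain p where p: "walk V E p" "hd p = x" "last p = y"
    using assms unfolding connected_graph_def by blast
  then have "p \<noteq> []" by (simp add: walk_def)
  with p have "\<exists>n p. walk V E p \<and> hd p = x \<and> last p = y \<and> length p = Suc n"
    by (intro exI[of _ "length p - 1"] exI[of _ p]) auto
  then show ?thesis unfolding gdist_def by (rule LeastI_ex)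
qed

lemma gdist_self: "x \<in> V \<Longrightarrow> gdist V E x x = 0"
  unfolding gdist_def
  by (rule Least_eq_0, rule exI[of _ "[x]"]) (simp add: walk_def)

lemma gdist_pos:
  assumes "connected_graph V E" "x \<in> V" "y \<in> V" "x \<noteq> y"
  shows "gdist V E x y \<noteq> 0"
proof
  assume "gdist V E x y = 0"
  with gdist_walk[OF assms(1-3)] obtain p where "hd p = x" "last p = y" "length p = 1"
    by auto
  with assms(4) show False by (cases p) auto
qed

lemma gdist_adjacent:
  assumes "connected_graph V E" "x \<in> V" "y \<in> V" "E x y" "x \<noteq> y"
  shows "gdist V E x y = 1"
proof -
  have "walk V E [x, y]"
    using assms by (auto simp: walk_def nth_Cons split: nat.splits)
  then have "gdist V E x y \<le> 1"
    unfolding gdist_def by (intro Least_le exI[of _ "[x, y]"]) simp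
  with gdist_pos[OF assms(1-3,5)] show ?thesis by simp
qed

lemma gdist_not_adjacent:
  assumes "connected_graph V E" "x \<in> V" "y \<in> V" "\<not> E x y"
  shows "gdist V E x y \<noteq> 1"
proof
  assume "gdist V E x y = 1"
  with gdist_walk[OF assms(1-3)] obtain p
    where p: "walk V E p" "hd p = x" "last p = y" "length p = 2" by auto
  then obtain a b where "p = [a, b]"
    by (cases p; cases "tl p") auto
  with p assms(4) show False by (auto simp: walk_def)
qed

lemma set_dist_member: "x \<in> S \<Longrightarrow> x \<in> V \<Longrightarrow> set_dist V E x S = 0"
  unfolding set_dist_def by (rule Least_eq_0) (metis gdist_self)

lemma set_dist_nonmember:
  assumes "connected_graph V E" "x \<in> V" "S \<subseteq> V" "x \<notin> S" "S \<noteq> {}"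
  shows "set_dist V E x S \<noteq> 0"
proof -
  from assms(5) have "\<exists>d. \<exists>w\<in>S. d = gdist V E x w" by auto
  then have "\<exists>w\<in>S. set_dist V E x S = gdist V E x w"
    unfolding set_dist_def by (rule LeastI_ex)
  then obtain w where "w \<in> S" "set_dist V E x S = gdist V E x w" by blast
  moreover from \<open>w \<in> S\<close> assms(3,4) have "w \<in> V" "x \<noteq> w" by auto
  ultimately show ?thesis using gdist_pos[OF assms(1,2)] by simp
qed

lemma set_dist_singleton: "set_dist V E x {w} = gdist V E x w"
  unfolding set_dist_def by (simp add: Least_equality)

lemma locating_partitionI:
  assumes "connected_graph V E" "is_partition V P"
    and "\<And>S x y. S \<in> P \<Longrightarrow> x \<in> S \<Longrightarrow> y \<in> S \<Longrightarrow> x \<noteq> y \<Longrightarrow>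
           \<exists>T\<in>P. set_dist V E x T \<noteq> set_dist V E y T"
  shows "locating_partition V E P"
  unfolding locating_partition_def
proof (intro conjI assms(2) ballI impI)
  fix x y assume xy: "x \<in> V" "y \<in> V" "x \<noteq> y"
  with assms(2) obtain S where S: "S \<in> P" "x \<in> S" unfolding is_partition_def by blast
  show "\<exists>T\<in>P. set_dist V E x T \<noteq> set_dist V E y T"
  proof (cases "y \<in> S")
    case True
    with S xy assms(3) show ?thesis by blast
  next
    case False
    have "S \<subseteq> V" "S \<noteq> {}" using S assms(2) unfolding is_partition_def by auto
    with False S xy set_dist_member[of x S V E] set_dist_nonmember[OF assms(1), of y S]
    show ?thesis by auto
  qed
qed

lemma partition_dimension_le:
  "locating_partition V E P \<Longrightarrow> partition_dimension V E \<le> card P"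
  unfolding partition_dimension_def by (intro Least_le) blast

definition pairing_partition :: "'a set \<Rightarrow> 'a set \<Rightarrow> ('a \<Rightarrow> 'a) \<Rightarrow> 'a set set" where
  "pairing_partition V U f = (\<lambda>u. {u, f u}) ` U \<union> (\<lambda>x. {x}) ` (V - U - f ` U)"

lemma is_partition_pairing_partition:
  assumes "U \<subseteq> V" "f ` U \<subseteq> V" "inj_on f U" "U \<inter> f ` U = {}"
  shows "is_partition V (pairing_partition V U f)"
  using assms unfolding is_partition_def pairing_partition_def
  by (auto simp: inj_on_def)

lemma card_pairing_partition_le:
  assumes "finite V" "U \<subseteq> V" "f ` U \<subseteq> V" "inj_on f U" "U \<inter> f ` U = {}"
  shows "card (pairing_partition V U f) \<le> card V - card U"
proof -
  have finU: "finite U" "finite (f ` U)" using assms(1-3) finite_subset by auto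
  have "card (U \<union> f ` U) = 2 * card U"
    using card_Un_disjoint[OF finU assms(5)] card_image[OF assms(4)] by simp
  moreover have "card (V - U - f ` U) = card V - card (U \<union> f ` U)"
  proof -
    have "V - U - f ` U = V - (U \<union> f ` U)" by blast
    then show ?thesis using assms(2,3) finU by (simp add: card_Diff_subset)
  qed
  moreover have "card (U \<union> f ` U) \<le> card V"
    using assms(1-3) by (intro card_mono) auto
  moreover have "card (pairing_partition V U f) \<le> card U + card (V - U - f ` U)"
    unfolding pairing_partition_def
    by (rule order_trans[OF card_Un_le add_mono]) (use finU assms(1) in \<open>auto intro: card_image_le\<close>)
  ultimately show ?thesis by linarith
qed

lemma locating_pairing_partition:
  assumes "connected_graph V E" "U \<subseteq> V" "f ` U \<subseteq> V" "inj_on f U" "U \<inter> f ` U = {}"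
    and "v \<in> V - U - f ` U"
    and separated: "\<And>u. u \<in> U \<Longrightarrow> gdist V E u v \<noteq> gdist V E (f u) v"
  shows "locating_partition V E (pairing_partition V U f)"
proof (rule locating_partitionI[OF assms(1) is_partition_pairing_partition[OF assms(2-5)]])
  have v: "{v} \<in> pairing_partition V U f"
    using assms(6) unfolding pairing_partition_def by auto
  fix S x y
  assume "S \<in> pairing_partition V U f" "x \<in> S" "y \<in> S" "x \<noteq> y"
  then obtain u where "u \<in> U" "{x, y} = {u, f u}"
    unfolding pairing_partition_def by auto
  with separated[of u] have "set_dist V E x {v} \<noteq> set_dist V E y {v}"
    by (auto simp: set_dist_singleton doubleton_eq_iff)
  with v show "\<exists>T\<in>pairing_partition V U f. set_dist V E x T \<noteq> set_dist V E y T" by blast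
qed

lemma obtain_injection_with_card:
  assumes "m \<le> card A" "m \<le> card B"
  obtains U f where "U \<subseteq> A" "card U = m" "inj_on f U" "f ` U \<subseteq> B"
proof -
  obtain U where U: "U \<subseteq> A" "card U = m" "finite U"
    using obtain_subset_with_card_n[OF assms(1)] .
  obtain W where W: "W \<subseteq> B" "card W = m" "finite W"
    using obtain_subset_with_card_n[OF assms(2)] .
  from U W obtain f where "bij_betw f U W"
    using finite_same_card_bij by metis
  with U W that show ?thesis by (auto simp: bij_betw_def)
qed

lemma card_non_neighbours:
  assumes "simple_graph V E" "v \<in> V"
  shows "card (V - insert v {w \<in> V. E v w}) = card V - 1 - degree V E v"
proof -
  have "finite V" "v \<notin> {w \<in> V. E v w}"
    using assms(1) unfolding simple_graph_def by auto
  with assms(2) show ?thesis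
    by (subst card_Diff_subset) (auto simp: degree_def)
qed

theorem lemma10:
  fixes V :: "'a set" and E :: "'a \<Rightarrow> 'a \<Rightarrow> bool" and v :: 'a and n k :: nat
  assumes "simple_graph V E" and "connected_graph V E"
    and "card V = n" and "n \<ge> 2"
    and "v \<in> V" and "degree V E v = k"
  shows "partition_dimension V E \<le> n - min k (n - 1 - k)"
proof -
  have finV: "finite V" and sym: "\<And>a b. E a b \<Longrightarrow> E b a" and irrefl: "\<And>a. \<not> E a a"
    using assms(1) unfolding simple_graph_def by blast+
  define N where "N = {w \<in> V. E v w}"
  define M where "M = V - insert v N"
  define m where "m = min k (n - 1 - k)"
  have "card N = k" "card M = n - 1 - k"
    using assms card_non_neighbours[OF assms(1,5)] by (simp_all add: degree_def N_def M_def)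
  then obtain U f where U: "U \<subseteq> N" "card U = m" "inj_on f U" "f ` U \<subseteq> M"
    using obtain_injection_with_card[of m N M] by (auto simp: m_def)
  have sub: "U \<subseteq> V" "f ` U \<subseteq> V" "U \<inter> f ` U = {}" "v \<in> V - U - f ` U"
    using U assms(5) irrefl unfolding N_def M_def by auto
  have "gdist V E u v \<noteq> gdist V E (f u) v" if "u \<in> U" for u
  proof -
    have "u \<in> V" "E u v" "u \<noteq> v" using that U sym irrefl unfolding N_def by auto
    moreover have "f u \<in> V" "\<not> E (f u) v" using that U sym unfolding M_def N_def by auto
    ultimately show ?thesis
      using gdist_adjacent[OF assms(2) _ assms(5)] gdist_not_adjacent[OF assms(2) _ assms(5)]
      by metis
  qed
  then have "partition_dimension V E \<le> card (pairing_partition V U f)"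
    by (intro partition_dimension_le locating_pairing_partition[OF assms(2) sub(1,2) U(3) sub(3,4)])
  also have "\<dots> \<le> n - m"
    using card_pairing_partition_le[OF finV sub(1,2) U(3) sub(3)] U(2) assms(3) by simp
  finally show ?thesis unfolding m_def .
qed

end
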